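(* Fix $\phi\in\mathbb{R}^d$ with $\mu=\|\phi\|^2>0$, a ground-truth class $y\in[V]$ with one-hot label ${\bm y}={\bm e}_y$, softmax cross-entropy $f({\bm z},{\bm y})=-\sum_k y_k\log p_k({\bm z})$ (with $L$ a uniform bound on the norms of its first three ${\bm z}$-derivatives), $\kappa\ge0$, and ${\bm W}^t\in\mathbb{R}^{V\times d}$. Let ${\bm z}^t={\bm W}^t\phi$, ${\bm p}^t=\mathrm{softmax}({\bm z}^t)$, ${\bm g}^t={\bm p}^t-{\bm y}$, ${\bm H}^t_{{\bm z}}=\mathrm{diag}({\bm p}^t)-{\bm p}^t({\bm p}^t)^\top$, $y^*=\arg\max_{j\neq y}p_j^t$. Let $S=p^t_y+p^t_{y^*}$, $\tau=1-S$, $\bar p_y=p^t_y/S$, $\Delta_{\mathrm{bin}}(\bar p_y)=4\bar p_y(1-\bar p_y)^2$, $B=\sqrt2$, and assume there exists $\gamma_0>0$ with $$\frac{4Be^2}{p^t_{y^*}}\tau\le\gamma_0\le\Delta_{\mathrm{bin}}(\bar p_y)-6\tau.$$ For step size $\eta$ with $|\eta|\in(0,1]$ take $|\rho|=\kappa\sqrt{|\eta|}$, set $\eta'=\eta\mu$ and $\tilde\rho^{\,t}=\rho\sqrt\mu/\|{\bm g}^t\|$ ($0$ if ${\bm g}^t=0$), and assume the sign condition $\eta'\tilde\rho^{\,t}>0$. With $F({\bm W})=f({\bm W}\phi,{\bm y})$, define ${\bm W}^{t+1}(\mathrm{GD})={\bm W}^t-\eta\nabla F({\bm W}^t)$, ${\bm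 W}^{t+1}(\mathrm{SAM})={\bm W}^t-\eta\nabla F({\bm W}^t+\rho\nabla F({\bm W}^t)/\|\nabla F({\bm W}^t)\|)$, and $\alpha_i^{(a)}=p_i^{t+1}(a)/p_i^t$ with ${\bm p}^{t+1}(a)=\mathrm{softmax}({\bm W}^{t+1}(a)\phi)$. Then there exists $\eta_0>0$, depending only on $({\bm p}^t,{\bm H}^t_{{\bm z}},\|{\bm g}^t\|,\mu,\kappa,L,\gamma_0)$, such that for all $0<|\eta|\le\eta_0$, $$\alpha^{\mathrm{SAM}}_y\ge\alpha^{\mathrm{GD}}_y.$$ Moreover the inequality is strict whenever $\tilde\rho^{\,t}\neq0$ and $p^t_{y^*}\in(0,1)$, and equality holds when $\tilde\rho^{\,t}=0$.
   Context: $\|\cdot\|$ is Euclidean/Frobenius norm; $\nabla F({\bm W})=({\bm p}({\bm W}\phi)-{\bm y})\phi^\top$. $\alpha_i$ is the one-step confidence ratio of class $i$. *)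

theory Defs
  imports "HOL-Analysis.Analysis"
begin

text \<open>Classes are indexed by a finite type 'v (so V = CARD('v)), features by 'd.
  Weight matrices W in R^{V x d} have type real^'d^'v; norm on them is Frobenius.\<close>

definition softmax :: "real^'v \<Rightarrow> real^'v" where
  "softmax z = (\<chi> i. exp (z$i) / (\<Sum>j\<in>UNIV. exp (z$j)))"

definition onehot :: "'v \<Rightarrow> real^'v" where
  "onehot y = (\<chi> i. if i = y then 1 else 0)"

definition ce_loss :: "real^'v \<Rightarrow> real^'v \<Rightarrow> real" where
  "ce_loss z yv = - (\<Sum>k\<in>UNIV. yv$k * ln (softmax z $ k))"

text \<open>Gradient of F(W) = f(W phi, e_y):  (p(W phi) - e_y) phi^T.\<close>
definition gradF :: "real^'d \<Rightarrow> 'v \<Rightarrow> real^'d^'v \<Rightarrow> real^'d^'v" where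
  "gradF phi y W = (\<chi> i j. (softmax (W *v phi) - onehot y)$i * phi$j)"

definition gd_step :: "real \<Rightarrow> real^'d \<Rightarrow> 'v \<Rightarrow> real^'d^'v \<Rightarrow> real^'d^'v" where
  "gd_step \<eta> phi y W = W - \<eta> *\<^sub>R gradF phi y W"

definition sam_step :: "real \<Rightarrow> real \<Rightarrow> real^'d \<Rightarrow> 'v \<Rightarrow> real^'d^'v \<Rightarrow> real^'d^'v" where
  "sam_step \<eta> \<rho> phi y W =
     W - \<eta> *\<^sub>R gradF phi y (W + (\<rho> / norm (gradF phi y W)) *\<^sub>R gradF phi y W)"

definition conf_ratio :: "real^'d \<Rightarrow> real^'d^'v \<Rightarrow> real^'d^'v \<Rightarrow> 'v \<Rightarrow> real" where
  "conf_ratio phi Wnew W i = softmax (Wnew *v phi) $ i / softmax (W *v phi) $ i"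

end

theory Submission
  imports Defs
begin

(* Both updates move the logits z = W phi by -eta mu times a direction: g = p - e_y for GD and
   softmax (z + rho~ g) - e_y for SAM. Since alpha_y is the ratio of the relative partition sums
   sum_j exp (x_j - x_y) before and after the step, SAM beats GD iff its partition sum is smaller.
   With c = eta mu and t = rho~ the gap between the two sums is c t G(c, t), where G is continuous
   at the origin and G(0, 0) = g^T H g / p_y for the softmax Hessian H = diag p - p p^T. This is
   the p-variance of g, positive because g_y < 0 < g_j for j ~= y. So for small (c, t) the gap has
   the sign of eta mu rho~, and |rho| = kappa sqrt |eta| keeps (c, t) small together with eta. *)

definition outer_prod :: "real^'m \<Rightarrow> real^'n \<Rightarrow> real^'n^'m" where
  "outer_prod h x = (\<chi> i j. h$i * x$j)"

lemma outer_prod_mult_vec: "outer_prod h x *v x = (norm x)\<^sup>2 *\<^sub>R h"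
  by (simp add: vec_eq_iff matrix_vector_mult_def outer_prod_def power2_norm_eq_inner
      inner_vec_def sum_distrib_left algebra_simps)

lemma norm_outer_prod: "norm (outer_prod h x) = norm h * norm x"
proof -
  have "outer_prod h x $ i = h$i *\<^sub>R x" for i
    by (simp add: outer_prod_def vec_eq_iff)
  then have "norm (outer_prod h x $ i) = \<bar>h$i\<bar> * norm x" for i
    by simp
  then show ?thesis
    unfolding norm_vec_def[of "outer_prod h x"] norm_vec_def[of h]
    by (simp add: L2_set_left_distrib)
qed

lemma gradF_eq_outer_prod: "gradF phi y W = outer_prod (softmax (W *v phi) - onehot y) phi"
  by (simp add: gradF_def outer_prod_def)

lemma softmax_pos: "softmax z $ i > 0"
  by (simp add: softmax_def sum_pos)

lemma sum_softmax: "(\<Sum>i\<in>UNIV. softmax z $ i) = 1"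
proof -
  have "(\<Sum>j\<in>UNIV. exp (z$j)) > 0"
    by (simp add: sum_pos)
  then show ?thesis
    by (simp add: softmax_def flip: sum_divide_distrib)
qed

lemma softmax_lt_one:
  assumes "j \<noteq> i"
  shows "softmax z $ i < 1"
proof -
  have "softmax z $ i + softmax z $ j = (\<Sum>k\<in>{i, j}. softmax z $ k)"
    using assms by simp
  also have "\<dots> \<le> (\<Sum>k\<in>UNIV. softmax z $ k)"
    by (rule sum_mono2) (simp_all add: softmax_pos less_imp_le)
  finally show ?thesis
    using softmax_pos[of z j] by (simp add: sum_softmax)
qed

lemma softmax_has_derivative_along_line:
  "((\<lambda>t. softmax (z + t *\<^sub>R g) $ k) has_field_derivative
     softmax z $ k * (g$k - (\<Sum>l\<in>UNIV. softmax z $ l * g$l))) (at 0)"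
proof -
  define Z where "Z = (\<Sum>j\<in>UNIV. exp (z$j))"
  have "Z > 0" unfolding Z_def by (simp add: sum_pos)
  have num: "((\<lambda>t. exp (z$k + t * g$k)) has_field_derivative exp (z$k) * g$k) (at 0)"
    by (auto intro!: derivative_eq_intros)
  have den: "((\<lambda>t. \<Sum>j\<in>UNIV. exp (z$j + t * g$j)) has_field_derivative
      (\<Sum>j\<in>UNIV. exp (z$j) * g$j)) (at 0)"
    by (auto intro!: derivative_eq_intros)
  have "((\<lambda>t. exp (z$k + t * g$k) / (\<Sum>j\<in>UNIV. exp (z$j + t * g$j))) has_field_derivative
     (exp (z$k) * g$k * Z - exp (z$k) * (\<Sum>j\<in>UNIV. exp (z$j) * g$j)) / (Z * Z)) (at 0)"
    using DERIV_divide[OF num den] \<open>Z > 0\<close> by (simp add: Z_def)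
  moreover have "(exp (z$k) * g$k * Z - exp (z$k) * (\<Sum>j\<in>UNIV. exp (z$j) * g$j)) / (Z * Z)
      = softmax z $ k * (g$k - (\<Sum>l\<in>UNIV. softmax z $ l * g$l))"
    using \<open>Z > 0\<close> by (simp add: softmax_def Z_def[symmetric] field_simps
        flip: sum_divide_distrib)
  ultimately show ?thesis
    by (simp add: softmax_def)
qed

lemma weighted_variance_pos:
  fixes p x :: "'a \<Rightarrow> real"
  assumes "finite A" "\<And>j. j \<in> A \<Longrightarrow> p j > 0" "i \<in> A" "k \<in> A" "x i \<noteq> x k"
  shows "(\<Sum>j\<in>A. p j * (x j - c)\<^sup>2) > 0"
proof -
  have nonneg: "p j * (x j - c)\<^sup>2 \<ge> 0" if "j \<in> A" for j
    using assms(2)[OF that] by simp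
  have "x i \<noteq> c \<or> x k \<noteq> c"
    using assms(5) by auto
  then have "p i * (x i - c)\<^sup>2 > 0 \<or> p k * (x k - c)\<^sup>2 > 0"
    using assms(2-4) by auto
  then have "0 < p i * (x i - c)\<^sup>2 + p k * (x k - c)\<^sup>2"
    using nonneg assms(3,4) by (meson add_pos_nonneg add_nonneg_pos)
  also have "\<dots> = (\<Sum>j\<in>{i, k}. p j * (x j - c)\<^sup>2)"
    using assms(5) by (cases "i = k") auto
  also have "\<dots> \<le> (\<Sum>j\<in>A. p j * (x j - c)\<^sup>2)"
    using assms(1,3,4) nonneg by (intro sum_mono2) auto
  finally show ?thesis .
qed

(* The left-hand side is g^T H g with H = diag p - p p^T: (H g)_j = p_j (g_j - m) and p - g = e_y. *)
lemma softmax_curvature_eq_variance: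
  fixes p :: "real^'v" and y :: 'v
  assumes "(\<Sum>i\<in>UNIV. p$i) = 1"
  defines "g \<equiv> p - onehot y"
  defines "m \<equiv> (\<Sum>l\<in>UNIV. p$l * g$l)"
  shows "(\<Sum>j\<in>UNIV. p$j * (p$j * (g$j - m) - p$y * (g$y - m)))
       = (\<Sum>j\<in>UNIV. p$j * (g$j - m)\<^sup>2)"
proof -
  have centred: "(\<Sum>j\<in>UNIV. p$j * (g$j - m)) = 0"
    by (simp add: m_def right_diff_distrib sum_subtractf assms(1) flip: sum_distrib_right)
  have g_mult: "g$j * a = p$j * a - (if j = y then a else 0)" for j a
    by (simp add: g_def onehot_def algebra_simps)
  have "(\<Sum>j\<in>UNIV. p$j * (g$j - m)\<^sup>2)
      = (\<Sum>j\<in>UNIV. g$j * (p$j * (g$j - m))) - m * (\<Sum>j\<in>UNIV. p$j * (g$j - m))"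
    by (simp add: sum_distrib_left power2_eq_square algebra_simps flip: sum_subtractf)
  also have "\<dots> = (\<Sum>j\<in>UNIV. p$j * (p$j * (g$j - m))) - p$y * (g$y - m)"
    by (simp only: centred g_mult sum_subtractf sum.delta) simp
  also have "\<dots> = (\<Sum>j\<in>UNIV. p$j * (p$j * (g$j - m) - p$y * (g$y - m)))"
    by (simp add: right_diff_distrib sum_subtractf assms(1) flip: sum_distrib_right)
  finally show ?thesis ..
qed

lemma softmax_curvature_pos:
  fixes z :: "real^'v" and y :: 'v
  defines "p \<equiv> softmax z"
  defines "g \<equiv> p - onehot y"
  defines "m \<equiv> (\<Sum>l\<in>UNIV. p$l * g$l)"
  assumes "p$y < 1"
  shows "(\<Sum>j\<in>UNIV. p$j * (p$j * (g$j - m) - p$y * (g$y - m))) > 0"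
proof -
  have sum_p: "(\<Sum>i\<in>UNIV. p$i) = 1"
    by (simp add: p_def sum_softmax)
  have "UNIV \<noteq> {y}"
  proof
    assume "UNIV = {y}"
    then have "(\<Sum>i\<in>UNIV. p$i) = p$y"
      by (metis sum.insert finite.emptyI empty_iff sum.empty add.right_neutral)
    with assms(4) sum_p show False
      by simp
  qed
  then obtain k where "k \<noteq> y"
    by blast
  then have "g$y < 0" "g$k > 0"
    using assms(4) by (simp_all add: g_def onehot_def p_def softmax_pos)
  then have "(\<Sum>j\<in>UNIV. p$j * (g$j - m)\<^sup>2) > 0"
    by (intro weighted_variance_pos[where i = y and k = k]) (auto simp: p_def softmax_pos)
  then show ?thesis
    unfolding g_def m_def softmax_curvature_eq_variance[OF sum_p] .
qed

definition rel_partition :: "real^'v \<Rightarrow> 'v \<Rightarrow> real" where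
  "rel_partition x y = (\<Sum>j\<in>UNIV. exp (x$j - x$y))"

lemma rel_partition_pos: "rel_partition x y > 0"
  by (simp add: rel_partition_def sum_pos)

lemma rel_partition_diff:
  "rel_partition (x - d) y = (\<Sum>j\<in>UNIV. exp (x$j - x$y) * exp (- (d$j - d$y)))"
  by (simp add: rel_partition_def algebra_simps flip: exp_add)

lemma softmax_eq_inverse_rel_partition: "softmax x $ y = 1 / rel_partition x y"
  by (simp add: softmax_def rel_partition_def exp_diff sum_divide_distrib[symmetric])

lemma conf_ratio_eq_rel_partition:
  "conf_ratio phi W' W y = rel_partition (W *v phi) y / rel_partition (W' *v phi) y"
  by (simp add: conf_ratio_def softmax_eq_inverse_rel_partition)

lemma gd_step_logits:
  "gd_step \<eta> phi y W *v phi
     = W *v phi - (\<eta> * (norm phi)\<^sup>2) *\<^sub>R (softmax (W *v phi) - onehot y)"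
  by (simp add: gd_step_def gradF_eq_outer_prod matrix_vector_mult_diff_rdistrib
      scaleR_matrix_vector_assoc[symmetric] outer_prod_mult_vec)

(* No hypothesis on g or phi: if either vanishes, both sides agree because x / 0 = 0. *)
lemma sam_step_logits:
  fixes W :: "real^'d^'v" and phi :: "real^'d" and y :: 'v
  defines "g \<equiv> softmax (W *v phi) - onehot y"
  shows "sam_step \<eta> \<rho> phi y W *v phi
     = W *v phi - (\<eta> * (norm phi)\<^sup>2) *\<^sub>R
         (softmax (W *v phi + (\<rho> * norm phi / norm g) *\<^sub>R g) - onehot y)"
proof -
  have "(W + (\<rho> / norm (gradF phi y W)) *\<^sub>R gradF phi y W) *v phi
      = W *v phi + (\<rho> * norm phi / norm g) *\<^sub>R g"
    by (simp add: gradF_eq_outer_prod g_def[symmetric] matrix_vector_mult_add_rdistrib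
        scaleR_matrix_vector_assoc[symmetric] outer_prod_mult_vec norm_outer_prod power2_eq_square)
  then show ?thesis
    by (simp add: sam_step_def gradF_eq_outer_prod matrix_vector_mult_diff_rdistrib
        scaleR_matrix_vector_assoc[symmetric] outer_prod_mult_vec)
qed

lemma isCont_difference_quotient:
  fixes f :: "real \<Rightarrow> real"
  assumes "(f has_field_derivative D) (at 0)" "f 0 = 0"
  shows "isCont (\<lambda>t. if t = 0 then D else f t / t) 0"
proof -
  have "((\<lambda>t. f t / t) \<longlongrightarrow> D) (at 0)"
    using assms by (simp add: has_field_derivative_iff)
  moreover have "\<forall>\<^sub>F t in at 0. (if t = 0 then D else f t / t) = f t / t"
    by (simp add: eventually_at_filter)
  ultimately show ?thesis
    by (simp add: isCont_def tendsto_cong)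
qed

lemma isCont_one_minus_exp_neg_quotient:
  "isCont (\<lambda>x::real. if x = 0 then 1 else (1 - exp (- x)) / x) 0"
  by (rule isCont_difference_quotient) (auto intro!: derivative_eq_intros)

lemma eventually_sum_one_minus_exp_pos:
  fixes a w :: "'i \<Rightarrow> real \<Rightarrow> real" and D :: "'i \<Rightarrow> real"
  assumes "finite I"
    and a_cont: "\<And>j. j \<in> I \<Longrightarrow> isCont (a j) 0"
    and w_deriv: "\<And>j. j \<in> I \<Longrightarrow> (w j has_field_derivative D j) (at 0)"
    and w_0: "\<And>j. j \<in> I \<Longrightarrow> w j 0 = 0"
    and pos: "(\<Sum>j\<in>I. a j 0 * D j) > 0"
  shows "\<forall>\<^sub>F (c, t) in nhds (0, 0). 0 < c * t \<longrightarrow>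
           (\<Sum>j\<in>I. a j c * (1 - exp (- (c * w j t)))) > 0"
proof -
  \<comment> \<open>For c t \<noteq> 0 the sum equals c t G(c, t), and G is continuous at the origin.\<close>
  define E where "E x = (if x = 0 then 1 else (1 - exp (- x)) / x)" for x :: real
  define slope where "slope j t = (if t = 0 then D j else w j t / t)" for j t
  define G where "G c t = (\<Sum>j\<in>I. a j c * E (c * w j t) * slope j t)" for c t
  have isCont_E: "isCont E 0"
    unfolding E_def[abs_def] by (rule isCont_one_minus_exp_neg_quotient)
  have isCont_slope: "isCont (slope j) 0" if "j \<in> I" for j
    unfolding slope_def[abs_def] using w_deriv[OF that] w_0[OF that] by (rule isCont_difference_quotient)
  have fst: "((\<lambda>x::real \<times> real. fst x) \<longlongrightarrow> 0) (nhds (0::real, 0::real))"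
   and snd: "((\<lambda>x::real \<times> real. snd x) \<longlongrightarrow> 0) (nhds (0::real, 0::real))"
    using tendsto_fst[OF filterlim_ident, of "(0, 0)"] tendsto_snd[OF filterlim_ident, of "(0, 0)"]
    by simp_all
  have "((\<lambda>x. G (fst x) (snd x)) \<longlongrightarrow> G 0 0) (nhds (0::real, 0::real))"
    unfolding G_def
  proof (intro tendsto_sum tendsto_mult)
    fix j assume "j \<in> I"
    show "((\<lambda>x. a j (fst x)) \<longlongrightarrow> a j 0) (nhds (0::real, 0::real))"
      using a_cont[OF \<open>j \<in> I\<close>] fst by (rule isCont_tendsto_compose)
    show "((\<lambda>x. slope j (snd x)) \<longlongrightarrow> slope j 0) (nhds (0::real, 0::real))"
      using isCont_slope[OF \<open>j \<in> I\<close>] snd by (rule isCont_tendsto_compose)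
    have "((\<lambda>x. w j (snd x)) \<longlongrightarrow> w j 0) (nhds (0::real, 0::real))"
      using DERIV_isCont[OF w_deriv[OF \<open>j \<in> I\<close>]] snd by (rule isCont_tendsto_compose)
    then have "((\<lambda>x. fst x * w j (snd x)) \<longlongrightarrow> 0) (nhds (0::real, 0::real))"
      using tendsto_mult[OF fst] by fastforce
    with isCont_E have "((\<lambda>x. E (fst x * w j (snd x))) \<longlongrightarrow> E 0) (nhds (0::real, 0::real))"
      by (rule isCont_tendsto_compose)
    then show "((\<lambda>x. E (fst x * w j (snd x))) \<longlongrightarrow> E (0 * w j 0)) (nhds (0::real, 0::real))"
      by simp
  qed
  moreover have "G 0 0 > 0"
    using pos w_0 by (simp add: G_def E_def slope_def)
  ultimately have "\<forall>\<^sub>F (c, t) in nhds (0, 0). G c t > 0"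
    using order_tendstoD(1) by (fastforce simp: case_prod_beta')
  then show ?thesis
  proof (rule eventually_mono, clarify)
    fix c t :: real
    assume "G c t > 0" and "0 < c * t"
    then have "c \<noteq> 0" "t \<noteq> 0"
      by auto
    have "1 - exp (- (c * w j t)) = c * t * (E (c * w j t) * slope j t)" for j
      using \<open>c \<noteq> 0\<close> \<open>t \<noteq> 0\<close> by (cases "w j t = 0") (simp_all add: E_def slope_def)
    then have "(\<Sum>j\<in>I. a j c * (1 - exp (- (c * w j t)))) = c * t * G c t"
      by (simp add: G_def sum_distrib_left mult_ac)
    with \<open>G c t > 0\<close> \<open>0 < c * t\<close> show "(\<Sum>j\<in>I. a j c * (1 - exp (- (c * w j t)))) > 0"
      by simp
  qed
qed

lemma sam_perturbation_decreases_rel_partition: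
  fixes z :: "real^'v" and y :: 'v
  defines "g \<equiv> softmax z - onehot y"
  assumes "softmax z $ y < 1"
  shows "\<forall>\<^sub>F (c, t) in nhds (0, 0). 0 < c * t \<longrightarrow>
           rel_partition (z - c *\<^sub>R (softmax (z + t *\<^sub>R g) - onehot y)) y
             < rel_partition (z - c *\<^sub>R g) y"
proof -
  define p where "p = softmax z"
  define m where "m = (\<Sum>l\<in>UNIV. p$l * g$l)"
  define a where "a j c = exp (z$j - z$y - c * (g$j - g$y))" for j c
  define w where "w j t = (softmax (z + t *\<^sub>R g) $ j - softmax (z + t *\<^sub>R g) $ y) - (p$j - p$y)"
    for j t
  define D where "D j = p$j * (g$j - m) - p$y * (g$y - m)" for j
  have gap: "rel_partition (z - c *\<^sub>R g) y
        - rel_partition (z - c *\<^sub>R (softmax (z + t *\<^sub>R g) - onehot y)) y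
      = (\<Sum>j\<in>UNIV. a j c * (1 - exp (- (c * w j t))))" for c t
  proof -
    have sam_logits: "z - c *\<^sub>R (softmax (z + t *\<^sub>R g) - onehot y)
        = (z - c *\<^sub>R g) - c *\<^sub>R (softmax (z + t *\<^sub>R g) - p)"
      by (simp add: g_def p_def algebra_simps)
    show ?thesis
      unfolding sam_logits rel_partition_diff[of "z - c *\<^sub>R g"]
      by (simp add: rel_partition_def a_def w_def algebra_simps sum_subtractf)
  qed
  have "(\<Sum>j\<in>UNIV. a j 0 * D j) = (\<Sum>j\<in>UNIV. p$j * D j) / p$y"
    using sum_pos[of UNIV "\<lambda>j. exp (z$j)"]
    by (simp add: a_def p_def softmax_def exp_diff flip: sum_divide_distrib)
  also have "\<dots> > 0"
    unfolding D_def m_def g_def p_def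
    using softmax_curvature_pos[OF assms(2)] softmax_pos[of z y] by (rule divide_pos_pos)
  finally have "(\<Sum>j\<in>UNIV. a j 0 * D j) > 0" .
  moreover have "(w j has_field_derivative D j) (at 0)" for j
    unfolding w_def[abs_def] D_def m_def p_def
    by (auto intro!: derivative_eq_intros softmax_has_derivative_along_line)
  moreover have "isCont (a j) 0" for j
    unfolding a_def by (intro continuous_intros)
  moreover have "w j 0 = 0" for j
    by (simp add: w_def p_def)
  ultimately have "\<forall>\<^sub>F (c, t) in nhds (0, 0). 0 < c * t \<longrightarrow>
      (\<Sum>j\<in>UNIV. a j c * (1 - exp (- (c * w j t)))) > 0"
    by (intro eventually_sum_one_minus_exp_pos) auto
  then show ?thesis
    unfolding gap[symmetric] by simp
qed

lemma sam_conf_ratio_gt_gd: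
  fixes phi :: "real^'d" and W :: "real^'d^'v" and y :: 'v
  assumes "phi \<noteq> 0" "softmax (W *v phi) $ y < 1"
  shows "\<forall>\<^sub>F (\<eta>, \<rho>) in nhds (0, 0). 0 < \<eta> * \<rho> \<longrightarrow>
           conf_ratio phi (gd_step \<eta> phi y W) W y < conf_ratio phi (sam_step \<eta> \<rho> phi y W) W y"
proof -
  define z where "z = W *v phi"
  define g where "g = softmax z - onehot y"
  have "g$y \<noteq> 0"
    using assms(2) by (simp add: g_def z_def onehot_def)
  then have "g \<noteq> 0"
    by auto
  define scale where "scale = (\<lambda>(\<eta>, \<rho>). (\<eta> * (norm phi)\<^sup>2, \<rho> * (norm phi / norm g)))"
  have "filterlim scale (nhds (0, 0)) (nhds (0, 0))"
  proof -
    have "((\<lambda>x::real \<times> real. fst x) \<longlongrightarrow> 0) (nhds (0, 0))"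
     and "((\<lambda>x::real \<times> real. snd x) \<longlongrightarrow> 0) (nhds (0, 0))"
      using tendsto_fst[OF filterlim_ident, of "(0, 0)"] tendsto_snd[OF filterlim_ident, of "(0, 0)"]
      by simp_all
    from tendsto_Pair[OF tendsto_mult[OF this(1) tendsto_const] tendsto_mult[OF this(2) tendsto_const]]
    show ?thesis
      unfolding scale_def case_prod_beta' by (simp only: mult_zero_left)
  qed
  from eventually_compose_filterlim[OF sam_perturbation_decreases_rel_partition[OF assms(2)] this]
  have "\<forall>\<^sub>F (\<eta>, \<rho>) in nhds (0, 0).
          0 < (\<eta> * (norm phi)\<^sup>2) * (\<rho> * (norm phi / norm g)) \<longrightarrow>
          rel_partition (z - (\<eta> * (norm phi)\<^sup>2) *\<^sub>R
              (softmax (z + (\<rho> * (norm phi / norm g)) *\<^sub>R g) - onehot y)) y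
            < rel_partition (z - (\<eta> * (norm phi)\<^sup>2) *\<^sub>R g) y"
    by (simp add: scale_def case_prod_beta' z_def g_def)
  then show ?thesis
  proof (rule eventually_mono, clarify)
    fix \<eta> \<rho> :: real
    assume decrease: "0 < (\<eta> * (norm phi)\<^sup>2) * (\<rho> * (norm phi / norm g)) \<longrightarrow>
          rel_partition (z - (\<eta> * (norm phi)\<^sup>2) *\<^sub>R
              (softmax (z + (\<rho> * (norm phi / norm g)) *\<^sub>R g) - onehot y)) y
            < rel_partition (z - (\<eta> * (norm phi)\<^sup>2) *\<^sub>R g) y"
      and "0 < \<eta> * \<rho>"
    have "0 < (norm phi)\<^sup>2 * (norm phi / norm g)"
      using assms(1) \<open>g \<noteq> 0\<close> by simp
    with \<open>0 < \<eta> * \<rho>\<close> have "0 < (\<eta> * (norm phi)\<^sup>2) * (\<rho> * (norm phi / norm g))"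
      by (metis mult_pos_pos mult.assoc mult.left_commute)
    with decrease show "conf_ratio phi (gd_step \<eta> phi y W) W y < conf_ratio phi (sam_step \<eta> \<rho> phi y W) W y"
      by (simp add: g_def z_def conf_ratio_eq_rel_partition gd_step_logits sam_step_logits
          rel_partition_pos divide_strict_left_mono)
  qed
qed

lemma eventually_nhds_zero_on_sqrt_curve:
  fixes P :: "real \<times> real \<Rightarrow> bool" and \<kappa> :: real
  assumes "eventually P (nhds (0, 0))"
  shows "\<exists>\<eta>0>0. \<forall>\<eta> \<rho>. \<bar>\<eta>\<bar> \<le> \<eta>0 \<longrightarrow> \<bar>\<rho>\<bar> = \<kappa> * sqrt \<bar>\<eta>\<bar> \<longrightarrow> P (\<eta>, \<rho>)"
proof -
  obtain \<delta> where "\<delta> > 0" and \<delta>: "\<And>x. dist x (0, 0) < \<delta> \<Longrightarrow> P x"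
    using assms by (auto simp: eventually_nhds_metric)
  have "((\<lambda>s. s + \<bar>\<kappa>\<bar> * sqrt s) \<longlongrightarrow> 0 + \<bar>\<kappa>\<bar> * sqrt 0) (nhds 0)"
    by (intro tendsto_intros filterlim_ident)
  then have "\<forall>\<^sub>F s in nhds 0. s + \<bar>\<kappa>\<bar> * sqrt s < \<delta>"
    using \<open>\<delta> > 0\<close> by (simp add: order_tendstoD(2))
  then obtain d where "d > 0" and d: "\<And>s. dist s 0 < d \<Longrightarrow> s + \<bar>\<kappa>\<bar> * sqrt s < \<delta>"
    by (auto simp: eventually_nhds_metric)
  show ?thesis
  proof (intro exI[of _ "d / 2"] conjI allI impI)
    show "0 < d / 2"
      using \<open>d > 0\<close> by simp
    fix \<eta> \<rho> :: real
    assume "\<bar>\<eta>\<bar> \<le> d / 2" "\<bar>\<rho>\<bar> = \<kappa> * sqrt \<bar>\<eta>\<bar>"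
    have "dist (\<eta>, \<rho>) (0, 0) \<le> \<bar>\<eta>\<bar> + \<bar>\<rho>\<bar>"
      using norm_Pair_le[of \<eta> \<rho>] by (simp add: dist_norm)
    also have "\<dots> \<le> \<bar>\<eta>\<bar> + \<bar>\<kappa>\<bar> * sqrt \<bar>\<eta>\<bar>"
      using \<open>\<bar>\<rho>\<bar> = \<kappa> * sqrt \<bar>\<eta>\<bar>\<close> by (simp add: mult_right_mono)
    also have "\<dots> < \<delta>"
      using d \<open>\<bar>\<eta>\<bar> \<le> d / 2\<close> \<open>d > 0\<close> by simp
    finally show "P (\<eta>, \<rho>)"
      by (rule \<delta>)
  qed
qed

theorem corollary5:
  fixes phi :: "real^'d" and W :: "real^'d^'v" and y ystar :: 'v and \<kappa> :: real
  defines "\<mu> \<equiv> (norm phi)\<^sup>2"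
      and "p \<equiv> softmax (W *v phi)"
      and "g \<equiv> softmax (W *v phi) - onehot y"
  defines "S \<equiv> p$y + p$ystar"
  defines "\<tau> \<equiv> 1 - S" and "pbar \<equiv> p$y / S"
  defines "B \<equiv> sqrt 2"
  assumes mu_pos: "\<mu> > 0"
      and kappa: "\<kappa> \<ge> 0"
      and ystar: "ystar \<noteq> y" "\<forall>j. j \<noteq> y \<longrightarrow> p$j \<le> p$ystar"
      and gamma0: "\<exists>\<gamma>0>0. 4 * B * exp 2 / p$ystar * \<tau> \<le> \<gamma>0
                        \<and> \<gamma>0 \<le> 4 * pbar * (1 - pbar)\<^sup>2 - 6 * \<tau>"
  shows "\<exists>\<eta>0>0. \<forall>\<eta> \<rho>.
           let \<rho>t = (if g = 0 then 0 else \<rho> * sqrt \<mu> / norm g);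
               \<alpha>GD = conf_ratio phi (gd_step \<eta> phi y W) W y;
               \<alpha>SAM = conf_ratio phi (sam_step \<eta> \<rho> phi y W) W y
           in (0 < \<bar>\<eta>\<bar> \<and> \<bar>\<eta>\<bar> \<le> 1 \<and> \<bar>\<eta>\<bar> \<le> \<eta>0 \<and> \<bar>\<rho>\<bar> = \<kappa> * sqrt \<bar>\<eta>\<bar>
               \<and> (\<eta> * \<mu> * \<rho>t > 0 \<or> \<rho>t = 0))
              \<longrightarrow> \<alpha>SAM \<ge> \<alpha>GD
                  \<and> (\<rho>t \<noteq> 0 \<and> 0 < p$ystar \<and> p$ystar < 1 \<longrightarrow> \<alpha>SAM > \<alpha>GD)
                  \<and> (\<rho>t = 0 \<longrightarrow> \<alpha>SAM = \<alpha>GD)"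
proof -
  have "p$y < 1"
    using softmax_lt_one[OF ystar(1)] by (simp add: p_def)
  then have "g \<noteq> 0"
    by (auto simp: g_def p_def vec_eq_iff onehot_def)
  have "phi \<noteq> 0"
    using mu_pos by (auto simp: \<mu>_def)
  obtain \<eta>0 where "\<eta>0 > 0" and \<eta>0: "\<And>\<eta> \<rho>. \<bar>\<eta>\<bar> \<le> \<eta>0 \<Longrightarrow> \<bar>\<rho>\<bar> = \<kappa> * sqrt \<bar>\<eta>\<bar> \<Longrightarrow> 0 < \<eta> * \<rho> \<Longrightarrow>
      conf_ratio phi (gd_step \<eta> phi y W) W y < conf_ratio phi (sam_step \<eta> \<rho> phi y W) W y"
    using eventually_nhds_zero_on_sqrt_curve[OF sam_conf_ratio_gt_gd[OF \<open>phi \<noteq> 0\<close>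
        \<open>p$y < 1\<close>[unfolded p_def]], of \<kappa>] by auto
  have \<rho>t: "(if g = 0 then 0 else \<rho> * sqrt \<mu> / norm g) = \<rho> * (norm phi / norm g)" for \<rho>
    using \<open>g \<noteq> 0\<close> by (simp add: \<mu>_def)
  have "0 < \<mu> * (norm phi / norm g)"
    using \<open>g \<noteq> 0\<close> \<open>phi \<noteq> 0\<close> mu_pos by simp
  then have sign: "0 < \<eta> * \<mu> * (\<rho> * (norm phi / norm g)) \<longleftrightarrow> 0 < \<eta> * \<rho>" for \<eta> \<rho>
    by (metis mult.assoc mult.left_commute zero_less_mult_iff mult_pos_pos less_asym)
  have "sam_step \<eta> 0 phi y W = gd_step \<eta> phi y W" for \<eta>
    by (simp add: sam_step_def gd_step_def)
  then show ?thesis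
    unfolding Let_def \<rho>t sign
    using \<open>\<eta>0 > 0\<close> \<eta>0 \<open>g \<noteq> 0\<close> \<open>phi \<noteq> 0\<close> by (intro exI[of _ \<eta>0]) (auto simp: less_imp_le)
qed

end
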